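(* For every (closed) term $P$ and every event $e \in \Sigma$, $$[\![P]\!](e) = \bigcup_{Q \,:\, P \overset{e}{\Rightarrow} Q} [\![Q]\!].$$
   Context: Fix a set $\Sigma$ of events. Terms: $P, Q ::= \mathit{STOP} \mid \mathit{FAIL} \mid ?x{:}E \rightarrow P \mid P \,\Box\, Q \mid P \parallel_E Q$, where an event set $E$ is $f(y_1,\dots,y_n)$ with $f : \Sigma^n \to 2^\Sigma$ computable and each $y_i$ an event variable or event; $x$ is bound in $P$ in $?x{:}E\rightarrow P$. Terms are closed, so each $E$ denotes a subset of $\Sigma$; $[e/x]P$ is substitution of event $e$ for $x$. Trace semantics. A trace set is a prefix-closed subset of $\Sigma^*$ (possibly empty); $\varepsilon$ is the empty trace. For a trace set $T$: $eT := \{\varepsilon\} \cup \{et \mid t \in T\}$, $T(e) := \{t \mid et \in T\}$. For $E \subseteq \Sigma$, $\parallel_E$ on trace sets is the unique function with $\varnothing \parallel_E T = T \parallel_E \varnothing = \varnothing$ and, for nonempty $T_1, T_2$, $T_1 \parallel_E T_2 = \bigcup_{e \in E} e(T_1(e) \parallel_E T_2(e)) \cup \bigcup_{e \in \Sigma\setminus E}( e(T_1(e) \parallel_E T_2) \cup e(T_1 \parallel_E T_2(e)))$. The semantics: $[\![\mathit{STOP}]\!] = \{\varepsilon\}$, $[\![\mathit{FAIL}]\!] = \varnothing$, $[\![?x{:}E \rightarrow P]\!] = \{\varepsilon\} \cup \bigcup_{e \in E} e[\![ [e/x]P ]\!]$, $[\![P \Box Q]\!] = [\![P]\!] \cup [\![Q]\!]$,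 $[\![P \parallel_E Q]\!] = [\![P]\!] \parallel_E [\![Q]\!]$. Operational semantics. Actions $a ::= e \mid \tau$, $\tau \notin \Sigma$. Doomed terms: $D ::= \mathit{FAIL} \mid D \Box D \mid D \parallel_E P \mid P \parallel_E D$; viable terms $\hat P, \hat Q$ are non-doomed terms. The internal transition relation $\xrightarrow{a}$ is the least relation closed under: (1) $e \in E \Rightarrow (?x{:}E \rightarrow P) \xrightarrow{e} [e/x]P$; (2) $P \xrightarrow{\tau} P' \Rightarrow P \Box Q \xrightarrow{\tau} P' \Box Q$; (3) $Q \xrightarrow{\tau} Q' \Rightarrow P \Box Q \xrightarrow{\tau} P \Box Q'$; (4) $P \xrightarrow{e} P' \Rightarrow P \Box Q \xrightarrow{e} P'$; (5) $Q \xrightarrow{e} Q' \Rightarrow P \Box Q \xrightarrow{e} Q'$; (6) $P \xrightarrow{a} P'$, $a \notin E$, $\hat Q$ viable $\Rightarrow P \parallel_E \hat Q \xrightarrow{a} P' \parallel_E \hat Q$; (7) $Q \xrightarrow{a} Q'$, $a \notin E$, $\hat P$ viable $\Rightarrow \hat P \parallel_E Q \xrightarrow{a} \hat P \parallel_E Q'$; (8) $\hat P, \hat Q$ viable, $\hat P \xrightarrow{e} P'$, $\hat Q \xrightarrow{e} Q'$, $e \in E$ $\Rightarrow \hat P \parallel_E \hat Q \xrightarrow{e} P' \parallel_E Q'$; (9) $D_1, D_2$ doomed, $D_1 \xrightarrow{\tau} P_1 \Rightarrow D_1 \parallel_E D_2 \xrightarrow{\tau} P_1 \parallel_E D_2$;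 (10) $D_1, D_2$ doomed, $D_2 \xrightarrow{\tau} P_2 \Rightarrow D_1 \parallel_E D_2 \xrightarrow{\tau} D_1 \parallel_E P_2$; (11) $\mathit{FAIL} \Box \mathit{FAIL} \xrightarrow{\tau} \mathit{FAIL}$; (12) $\mathit{FAIL} \parallel_E P \xrightarrow{\tau} \mathit{FAIL}$; (13) $P \parallel_E \mathit{FAIL} \xrightarrow{\tau} \mathit{FAIL}$. For $s \in \Sigma^*$, the visible transition $P \overset{s}{\Rightarrow} Q$ holds iff there is a finite sequence (possibly of length zero) of internal transitions $P = P_0 \xrightarrow{a_1} P_1 \cdots \xrightarrow{a_n} P_n = Q$ such that deleting all $\tau$'s from $a_1 \cdots a_n$ yields $s$; in particular $P \overset{e}{\Rightarrow} Q$ means such a sequence whose only non-$\tau$ label is a single occurrence of $e$. *)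

theory Defs
  imports Main
begin

(* Sigma is the whole (nonempty) event type 'e; 'v is the type of event variables. *)

datatype ('e,'v) atom = Var 'v | Ev 'e

datatype ('e,'v) evset = EvSet "'e list \<Rightarrow> 'e set" "('e,'v) atom list"

datatype ('e,'v) proc =
    STOP
  | FAIL
  | Prefix 'v "('e,'v) evset" "('e,'v) proc"        (* ?x:E -> P, x bound in P *)
  | Ext "('e,'v) proc" "('e,'v) proc"
  | Par "('e,'v) proc" "('e,'v) evset" "('e,'v) proc"

fun fv_atom :: "('e,'v) atom \<Rightarrow> 'v set" where
  "fv_atom (Var x) = {x}"
| "fv_atom (Ev e) = {}"

fun fv_evset :: "('e,'v) evset \<Rightarrow> 'v set" where
  "fv_evset (EvSet f ys) = (\<Union>y\<in>set ys. fv_atom y)"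

primrec fv :: "('e,'v) proc \<Rightarrow> 'v set" where
  "fv STOP = {}"
| "fv FAIL = {}"
| "fv (Prefix x E P) = fv_evset E \<union> (fv P - {x})"
| "fv (Ext P Q) = fv P \<union> fv Q"
| "fv (Par P E Q) = fv P \<union> fv_evset E \<union> fv Q"

definition closed :: "('e,'v) proc \<Rightarrow> bool" where
  "closed P \<longleftrightarrow> fv P = {}"

(* denotation of an event set (meaningful for closed event sets) *)
fun atom_val :: "('e,'v) atom \<Rightarrow> 'e" where
  "atom_val (Ev e) = e"
| "atom_val (Var x) = undefined"

fun den :: "('e,'v) evset \<Rightarrow> 'e set" where
  "den (EvSet f ys) = f (map atom_val ys)"

fun subst_atom :: "'v \<Rightarrow> 'e \<Rightarrow> ('e,'v) atom \<Rightarrow> ('e,'v) atom" where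
  "subst_atom x e (Var y) = (if y = x then Ev e else Var y)"
| "subst_atom x e (Ev d) = Ev d"

fun subst_evset :: "'v \<Rightarrow> 'e \<Rightarrow> ('e,'v) evset \<Rightarrow> ('e,'v) evset" where
  "subst_evset x e (EvSet f ys) = EvSet f (map (subst_atom x e) ys)"

primrec subst :: "'v \<Rightarrow> 'e \<Rightarrow> ('e,'v) proc \<Rightarrow> ('e,'v) proc" where
  "subst x e STOP = STOP"
| "subst x e FAIL = FAIL"
| "subst x e (Prefix y E P) =
     Prefix y (subst_evset x e E) (if y = x then P else subst x e P)"
| "subst x e (Ext P Q) = Ext (subst x e P) (subst x e Q)"
| "subst x e (Par P E Q) = Par (subst x e P) (subst_evset x e E) (subst x e Q)"

lemma size_subst_atom[simp]: "size (subst_atom x e a) = size a"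
  by (cases a) auto

lemma size_subst_evset[simp]: "size (subst_evset x e E) = size E"
  by (cases E) (simp add: size_list_conv_sum_list comp_def)

lemma size_subst[simp]: "size (subst x e P) = size P"
  by (induction P) auto

definition tprefix :: "'e \<Rightarrow> 'e list set \<Rightarrow> 'e list set" where
  "tprefix e T = {[]} \<union> {e # t | t. t \<in> T}"

definition after :: "'e list set \<Rightarrow> 'e \<Rightarrow> 'e list set" where
  "after T e = {t. e # t \<in> T}"

(* parallel composition of trace sets: the unique function satisfying the
   defining equations, given here by recursion on the length of the trace
   (see lemma tpar_eq below). Sigma = UNIV :: 'e set. *)
fun tpar_mem :: "'e set \<Rightarrow> 'e list set \<Rightarrow> 'e list set \<Rightarrow> 'e list \<Rightarrow> bool" where
  "tpar_mem E T1 T2 [] = (T1 \<noteq> {} \<and> T2 \<noteq> {})"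
| "tpar_mem E T1 T2 (e # t) = (T1 \<noteq> {} \<and> T2 \<noteq> {} \<and>
     (if e \<in> E then tpar_mem E (after T1 e) (after T2 e) t
      else tpar_mem E (after T1 e) T2 t \<or> tpar_mem E T1 (after T2 e) t))"

definition tpar :: "'e set \<Rightarrow> 'e list set \<Rightarrow> 'e list set \<Rightarrow> 'e list set" where
  "tpar E T1 T2 = {t. tpar_mem E T1 T2 t}"

lemma tpar_empty: "tpar E {} T = {}" "tpar E T {} = {}"
  by (auto simp: tpar_def elim: tpar_mem.elims)

lemma tpar_eq:
  assumes "T1 \<noteq> {}" "T2 \<noteq> {}"
  shows "tpar E T1 T2 =
    (\<Union>e\<in>E. tprefix e (tpar E (after T1 e) (after T2 e))) \<union>
    (\<Union>e\<in>UNIV - E. tprefix e (tpar E (after T1 e) T2) \<union> tprefix e (tpar E T1 (after T2 e)))"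
proof (rule set_eqI)
  fix t show "t \<in> tpar E T1 T2 \<longleftrightarrow> t \<in> (\<Union>e\<in>E. tprefix e (tpar E (after T1 e) (after T2 e))) \<union>
    (\<Union>e\<in>UNIV - E. tprefix e (tpar E (after T1 e) T2) \<union> tprefix e (tpar E T1 (after T2 e)))"
  proof (cases t)
    case Nil
    have "E \<noteq> {} \<or> UNIV - E \<noteq> {}" by auto
    then show ?thesis using Nil assms by (auto simp: tpar_def tprefix_def)
  next
    case (Cons e s)
    then show ?thesis using assms by (auto simp: tpar_def tprefix_def split: if_splits)
  qed
qed

function (sequential) sem :: "('e,'v) proc \<Rightarrow> 'e list set" where
  "sem STOP = {[]}"
| "sem FAIL = {}"
| "sem (Prefix x E P) = {[]} \<union> (\<Union>e\<in>den E. tprefix e (sem (subst x e P)))"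
| "sem (Ext P Q) = sem P \<union> sem Q"
| "sem (Par P E Q) = tpar (den E) (sem P) (sem Q)"
  by pat_completeness auto
termination by (relation "measure size") auto

datatype 'e act = Tau | Evt 'e

definition act_notin :: "'e act \<Rightarrow> 'e set \<Rightarrow> bool" where
  "act_notin a E = (case a of Tau \<Rightarrow> True | Evt e \<Rightarrow> e \<notin> E)"

inductive doomed :: "('e,'v) proc \<Rightarrow> bool" where
  "doomed FAIL"
| "doomed D1 \<Longrightarrow> doomed D2 \<Longrightarrow> doomed (Ext D1 D2)"
| "doomed D \<Longrightarrow> doomed (Par D E P)"
| "doomed D \<Longrightarrow> doomed (Par P E D)"

abbreviation viable :: "('e,'v) proc \<Rightarrow> bool" where
  "viable P \<equiv> \<not> doomed P"

inductive step :: "('e,'v) proc \<Rightarrow> 'e act \<Rightarrow> ('e,'v) proc \<Rightarrow> bool" where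
  r1: "e \<in> den E \<Longrightarrow> step (Prefix x E P) (Evt e) (subst x e P)"
| r2: "step P Tau P' \<Longrightarrow> step (Ext P Q) Tau (Ext P' Q)"
| r3: "step Q Tau Q' \<Longrightarrow> step (Ext P Q) Tau (Ext P Q')"
| r4: "step P (Evt e) P' \<Longrightarrow> step (Ext P Q) (Evt e) P'"
| r5: "step Q (Evt e) Q' \<Longrightarrow> step (Ext P Q) (Evt e) Q'"
| r6: "step P a P' \<Longrightarrow> act_notin a (den E) \<Longrightarrow> viable Q \<Longrightarrow> step (Par P E Q) a (Par P' E Q)"
| r7: "step Q a Q' \<Longrightarrow> act_notin a (den E) \<Longrightarrow> viable P \<Longrightarrow> step (Par P E Q) a (Par P E Q')"
| r8: "viable P \<Longrightarrow> viable Q \<Longrightarrow> step P (Evt e) P' \<Longrightarrow> step Q (Evt e) Q' \<Longrightarrow> e \<in> den E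
       \<Longrightarrow> step (Par P E Q) (Evt e) (Par P' E Q')"
| r9: "doomed D1 \<Longrightarrow> doomed D2 \<Longrightarrow> step D1 Tau P1 \<Longrightarrow> step (Par D1 E D2) Tau (Par P1 E D2)"
| r10: "doomed D1 \<Longrightarrow> doomed D2 \<Longrightarrow> step D2 Tau P2 \<Longrightarrow> step (Par D1 E D2) Tau (Par D1 E P2)"
| r11: "step (Ext FAIL FAIL) Tau FAIL"
| r12: "step (Par FAIL E P) Tau FAIL"
| r13: "step (Par P E FAIL) Tau FAIL"

inductive weak :: "('e,'v) proc \<Rightarrow> 'e list \<Rightarrow> ('e,'v) proc \<Rightarrow> bool" where
  w_refl: "weak P [] P"
| w_tau: "step P Tau P' \<Longrightarrow> weak P' s Q \<Longrightarrow> weak P s Q"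
| w_evt: "step P (Evt e) P' \<Longrightarrow> weak P' s Q \<Longrightarrow> weak P (e # s) Q"

end

theory Submission
  imports Defs
begin

text \<open>Soundness: a \<open>\<tau>\<close>-step preserves the trace set and an \<open>e\<close>-step lands inside the
traces after \<open>e\<close>; induction along a visible transition gives \<open>\<supseteq>\<close>. Completeness, by
induction on \<open>P\<close>: a trace \<open>e # t\<close> of a parallel composition comes from single traces of
the components, which by induction are reached by visible \<open>e\<close>-transitions; these lift to
the composition through rules (6)--(8). The viability side conditions of those rules are
discharged by the fact that a term is doomed exactly when its trace set is empty.\<close>

lemma tpar_mem_nonempty: "tpar_mem E T1 T2 t \<Longrightarrow> T1 \<noteq> {} \<and> T2 \<noteq> {}"
  by (cases t) auto

lemma tpar_empty_iff: "tpar E T1 T2 = {} \<longleftrightarrow> T1 = {} \<or> T2 = {}"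
proof -
  have "[] \<in> tpar E T1 T2 \<longleftrightarrow> T1 \<noteq> {} \<and> T2 \<noteq> {}" by (simp add: tpar_def)
  then show ?thesis using tpar_empty by blast
qed

lemma after_empty [simp]: "after {} e = {}"
  by (simp add: after_def)

lemma after_tpar:
  "after (tpar E T1 T2) e =
    (if e \<in> E then tpar E (after T1 e) (after T2 e)
     else tpar E (after T1 e) T2 \<union> tpar E T1 (after T2 e))"
  by (auto simp: after_def tpar_def dest: tpar_mem_nonempty)

lemma tpar_mono: "T1 \<subseteq> U1 \<Longrightarrow> T2 \<subseteq> U2 \<Longrightarrow> tpar E T1 T2 \<subseteq> tpar E U1 U2"
proof -
  have "tpar_mem E T1 T2 t \<Longrightarrow> T1 \<subseteq> U1 \<Longrightarrow> T2 \<subseteq> U2 \<Longrightarrow> tpar_mem E U1 U2 t" for t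
  proof (induction t arbitrary: T1 T2 U1 U2)
    case (Cons e t)
    have "after T1 e \<subseteq> after U1 e" "after T2 e \<subseteq> after U2 e"
      using Cons.prems by (auto simp: after_def)
    with Cons show ?case by (auto split: if_splits)
  qed auto
  then show "T1 \<subseteq> U1 \<Longrightarrow> T2 \<subseteq> U2 \<Longrightarrow> tpar E T1 T2 \<subseteq> tpar E U1 U2"
    by (auto simp: tpar_def)
qed

lemma tpar_singletons:
  "t \<in> tpar E T1 T2 \<Longrightarrow> \<exists>t1\<in>T1. \<exists>t2\<in>T2. t \<in> tpar E {t1} {t2}"
proof (induction t arbitrary: T1 T2)
  case Nil
  then show ?case by (auto simp: tpar_def)
next
  case (Cons e t)
  then have t: "t \<in> after (tpar E T1 T2) e" by (simp add: after_def)
  show ?case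
  proof (cases "e \<in> E")
    case True
    with t have "t \<in> tpar E (after T1 e) (after T2 e)" by (simp add: after_tpar)
    with Cons.IH obtain t1 t2 where "t1 \<in> after T1 e" "t2 \<in> after T2 e" "t \<in> tpar E {t1} {t2}"
      by blast
    with True show ?thesis
      by (intro bexI[of _ "e # t1"] bexI[of _ "e # t2"]) (auto simp: after_def tpar_def)
  next
    case False
    with t consider "t \<in> tpar E (after T1 e) T2" | "t \<in> tpar E T1 (after T2 e)"
      by (auto simp: after_tpar)
    then show ?thesis
    proof cases
      case 1
      with Cons.IH obtain t1 t2 where "t1 \<in> after T1 e" "t2 \<in> T2" "t \<in> tpar E {t1} {t2}"
        by blast
      with False show ?thesis
        by (intro bexI[of _ "e # t1"] bexI[of _ t2]) (auto simp: after_def tpar_def)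
    next
      case 2
      with Cons.IH obtain t1 t2 where "t1 \<in> T1" "t2 \<in> after T2 e" "t \<in> tpar E {t1} {t2}"
        by blast
      with False show ?thesis
        by (intro bexI[of _ t1] bexI[of _ "e # t2"]) (auto simp: after_def tpar_def)
    qed
  qed
qed

lemma doomed_iff_sem_empty: "doomed P \<longleftrightarrow> sem P = {}"
proof
  show "doomed P \<Longrightarrow> sem P = {}"
    by (induction rule: doomed.induct) (auto simp: tpar_empty)
  show "sem P = {} \<Longrightarrow> doomed P"
    by (induction P rule: sem.induct) (auto simp: tpar_empty_iff intro: doomed.intros)
qed

lemma viable_if_mem_sem: "t \<in> sem P \<Longrightarrow> viable P"
  by (auto simp: doomed_iff_sem_empty)

lemma step_Tau_sem: "step P Tau P' \<Longrightarrow> sem P' = sem P"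
proof -
  have "step P a P' \<Longrightarrow> a = Tau \<Longrightarrow> sem P' = sem P" for a
    by (induction rule: step.induct) (auto simp: tpar_empty)
  then show "step P Tau P' \<Longrightarrow> sem P' = sem P" by blast
qed

lemma step_Evt_sem: "step P (Evt e) P' \<Longrightarrow> sem P' \<subseteq> after (sem P) e"
proof (induction P "Evt e" P' rule: step.induct)
  case (r6 P P' E Q)
  then have "e \<notin> den E" by (simp add: act_notin_def)
  with r6 show ?case by (auto simp: after_tpar dest: tpar_mono[OF _ order_refl])
next
  case (r7 Q Q' E P)
  then have "e \<notin> den E" by (simp add: act_notin_def)
  with r7 show ?case by (auto simp: after_tpar dest: tpar_mono[OF order_refl])
next
  case (r8 P Q P' Q' E)
  then show ?case by (auto simp: after_tpar dest: tpar_mono)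
qed (auto simp: after_def tprefix_def)

lemma weak_Nil_sem: "weak P [] Q \<Longrightarrow> sem Q = sem P"
proof -
  have "weak P s Q \<Longrightarrow> s = [] \<Longrightarrow> sem Q = sem P" for s
    by (induction rule: weak.induct) (auto dest: step_Tau_sem)
  then show "weak P [] Q \<Longrightarrow> sem Q = sem P" by blast
qed

lemma weak_sem: "weak P s Q \<Longrightarrow> sem Q \<subseteq> {t. s @ t \<in> sem P}"
proof (induction rule: weak.induct)
  case (w_tau P P' s Q)
  then show ?case using step_Tau_sem by blast
next
  case (w_evt P e P' s Q)
  then show ?case using step_Evt_sem by (fastforce simp: after_def)
qed simp

lemma weak_append: "weak P s Q \<Longrightarrow> weak Q r R \<Longrightarrow> weak P (s @ r) R"
  by (induction rule: weak.induct) (auto intro: weak.intros)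

lemma weak_ConsE:
  assumes "weak P (e # s) Q"
  obtains A B where "weak P [] A" "step A (Evt e) B" "weak B s Q"
proof -
  have "weak P s' Q \<Longrightarrow> s' = e # s \<Longrightarrow> \<exists>A B. weak P [] A \<and> step A (Evt e) B \<and> weak B s Q"
    for s'
    by (induction rule: weak.induct) (blast intro: weak.intros)+
  with assms that show thesis by blast
qed

lemma weak_Ext_left: "weak P (e # s) Q \<Longrightarrow> weak (Ext P R) (e # s) Q"
  by (induction P "e # s" Q rule: weak.induct) (auto intro: weak.intros step.intros)

lemma weak_Ext_right: "weak P (e # s) Q \<Longrightarrow> weak (Ext R P) (e # s) Q"
  by (induction P "e # s" Q rule: weak.induct) (auto intro: weak.intros step.intros)

lemma weak_Par_left:
  "weak P s Q \<Longrightarrow> set s \<inter> den E = {} \<Longrightarrow> viable R \<Longrightarrow> weak (Par P E R) s (Par Q E R)"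
proof (induction rule: weak.induct)
  case (w_tau P P' s Q)
  have "step (Par P E R) Tau (Par P' E R)"
    using step.r6[OF w_tau.hyps(1)] w_tau.prems by (simp add: act_notin_def)
  with w_tau show ?case by (blast intro: weak.w_tau)
next
  case (w_evt P e P' s Q)
  have "step (Par P E R) (Evt e) (Par P' E R)"
    using step.r6[OF w_evt.hyps(1)] w_evt.prems by (simp add: act_notin_def)
  with w_evt show ?case by (auto intro: weak.w_evt)
qed (rule weak.w_refl)

lemma weak_Par_right:
  "weak P s Q \<Longrightarrow> set s \<inter> den E = {} \<Longrightarrow> viable R \<Longrightarrow> weak (Par R E P) s (Par R E Q)"
proof (induction rule: weak.induct)
  case (w_tau P P' s Q)
  have "step (Par R E P) Tau (Par R E P')"
    using step.r7[OF w_tau.hyps(1)] w_tau.prems by (simp add: act_notin_def)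
  with w_tau show ?case by (blast intro: weak.w_tau)
next
  case (w_evt P e P' s Q)
  have "step (Par R E P) (Evt e) (Par R E P')"
    using step.r7[OF w_evt.hyps(1)] w_evt.prems by (simp add: act_notin_def)
  with w_evt show ?case by (auto intro: weak.w_evt)
qed (rule weak.w_refl)

lemma weak_Par_sync:
  assumes w1: "weak P1 [e] Q1" and w2: "weak P2 [e] Q2"
    and v1: "viable Q1" and v2: "viable Q2" and e: "e \<in> den E"
  shows "weak (Par P1 E P2) [e] (Par Q1 E Q2)"
proof -
  obtain A1 B1 where a1: "weak P1 [] A1" and s1: "step A1 (Evt e) B1" and b1: "weak B1 [] Q1"
    using w1 by (rule weak_ConsE)
  obtain A2 B2 where a2: "weak P2 [] A2" and s2: "step A2 (Evt e) B2" and b2: "weak B2 [] Q2"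
    using w2 by (rule weak_ConsE)
  have "viable B1" "viable B2"
    using v1 v2 weak_Nil_sem[OF b1] weak_Nil_sem[OF b2] by (simp_all add: doomed_iff_sem_empty)
  moreover have "viable A1" "viable A2" "viable P2"
    using calculation step_Evt_sem[OF s1] step_Evt_sem[OF s2] weak_Nil_sem[OF a2]
    by (auto simp: doomed_iff_sem_empty)
  ultimately have
    "weak (Par P1 E P2) [] (Par A1 E P2)"
    "weak (Par A1 E P2) [] (Par A1 E A2)"
    "weak (Par A1 E A2) [e] (Par B1 E B2)"
    "weak (Par B1 E B2) [] (Par B1 E Q2)"
    "weak (Par B1 E Q2) [] (Par Q1 E Q2)"
    using a1 a2 b1 b2 v2 weak.w_evt[OF step.r8[OF _ _ s1 s2 e] weak.w_refl]
    by (auto intro: weak_Par_left weak_Par_right)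
  then show ?thesis
    using weak_append by (metis append.left_neutral append_Cons)
qed

lemma weak_complete: "e # t \<in> sem P \<Longrightarrow> \<exists>Q. weak P [e] Q \<and> t \<in> sem Q"
proof (induction P arbitrary: e t rule: sem.induct)
  case (3 x E P)
  then have "e \<in> den E" "t \<in> sem (subst x e P)" by (auto simp: tprefix_def split: if_splits)
  then show ?case by (blast intro: step.r1 weak.w_evt weak.w_refl)
next
  case (4 P1 P2)
  then consider "e # t \<in> sem P1" | "e # t \<in> sem P2" by auto
  then show ?case
  proof cases
    case 1
    then obtain Q where Q: "weak P1 [e] Q" "t \<in> sem Q" using "4.IH"(1) by blast
    have "weak (Ext P1 P2) [e] Q" using Q(1) by (rule weak_Ext_left)
    with Q(2) show ?thesis by blast
  next
    case 2
    then obtain Q where Q: "weak P2 [e] Q" "t \<in> sem Q" using "4.IH"(2) by blast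
    have "weak (Ext P1 P2) [e] Q" using Q(1) by (rule weak_Ext_right)
    with Q(2) show ?thesis by blast
  qed
next
  case (5 P1 E P2)
  have t: "t \<in> after (tpar (den E) (sem P1) (sem P2)) e"
    using "5.prems" by (simp add: after_def)
  have IH1: "\<exists>Q1. weak P1 [e] Q1 \<and> t1 \<in> sem Q1" if "t1 \<in> after (sem P1) e" for t1
    using "5.IH"(1) that by (simp add: after_def)
  have IH2: "\<exists>Q2. weak P2 [e] Q2 \<and> t2 \<in> sem Q2" if "t2 \<in> after (sem P2) e" for t2
    using "5.IH"(2) that by (simp add: after_def)
  show ?case
  proof (cases "e \<in> den E")
    case True
    with t obtain t1 t2 where t1: "t1 \<in> after (sem P1) e" and t2: "t2 \<in> after (sem P2) e"
      and t12: "t \<in> tpar (den E) {t1} {t2}"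
      by (auto simp: after_tpar dest: tpar_singletons)
    obtain Q1 Q2 where Q1: "weak P1 [e] Q1" "t1 \<in> sem Q1" and Q2: "weak P2 [e] Q2" "t2 \<in> sem Q2"
      using IH1[OF t1] IH2[OF t2] by blast
    have "weak (Par P1 E P2) [e] (Par Q1 E Q2)"
      using Q1(1) Q2(1) viable_if_mem_sem[OF Q1(2)] viable_if_mem_sem[OF Q2(2)] True
      by (rule weak_Par_sync)
    moreover have "t \<in> sem (Par Q1 E Q2)"
      using t12 Q1(2) Q2(2) tpar_mono[of "{t1}" "sem Q1" "{t2}" "sem Q2" "den E"] by auto
    ultimately show ?thesis by blast
  next
    case False
    have "viable P1" "viable P2"
      using "5.prems" by (auto simp: doomed_iff_sem_empty tpar_empty)
    from t False consider
        (left) t1 t2 where "t1 \<in> after (sem P1) e" "t2 \<in> sem P2" "t \<in> tpar (den E) {t1} {t2}"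
      | (right) t1 t2 where "t1 \<in> sem P1" "t2 \<in> after (sem P2) e" "t \<in> tpar (den E) {t1} {t2}"
      by (auto simp: after_tpar dest: tpar_singletons)
    then show ?thesis
    proof cases
      case left
      then obtain Q1 where Q1: "weak P1 [e] Q1" "t1 \<in> sem Q1" using IH1 by blast
      have "weak (Par P1 E P2) [e] (Par Q1 E P2)"
        using weak_Par_left[OF Q1(1) _ \<open>viable P2\<close>] False by simp
      moreover have "t \<in> sem (Par Q1 E P2)"
        using left Q1(2) tpar_mono[of "{t1}" "sem Q1" "{t2}" "sem P2" "den E"] by auto
      ultimately show ?thesis by blast
    next
      case right
      then obtain Q2 where Q2: "weak P2 [e] Q2" "t2 \<in> sem Q2" using IH2 by blast
      have "weak (Par P1 E P2) [e] (Par P1 E Q2)"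
        using weak_Par_right[OF Q2(1) _ \<open>viable P1\<close>] False by simp
      moreover have "t \<in> sem (Par P1 E Q2)"
        using right Q2(2) tpar_mono[of "{t1}" "sem P1" "{t2}" "sem Q2" "den E"] by auto
      ultimately show ?thesis by blast
    qed
  qed
qed auto

theorem lemma2:
  fixes P :: "('e,'v) proc" and e :: 'e
  assumes "closed P"
  shows "after (sem P) e = (\<Union>Q\<in>{Q. weak P [e] Q}. sem Q)"
proof
  show "after (sem P) e \<subseteq> (\<Union>Q\<in>{Q. weak P [e] Q}. sem Q)"
    using weak_complete by (fastforce simp: after_def)
  show "(\<Union>Q\<in>{Q. weak P [e] Q}. sem Q) \<subseteq> after (sem P) e"
    using weak_sem by (fastforce simp: after_def)
qed

end
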